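(* Let $n\ge3$, let $S=(s_{ij})$ be an $n\times n$ magic square, and let $P=\{(x_{ij},y_{ij},z_{ij})\}$ with $x_{ij}=j-\frac{n-1}{2}$, $y_{ij}=\frac{n-1}{2}-i$, $z_{ij}=s_{ij}-\frac{n^2+1}{2}$. For $\epsilon=(\epsilon_{ij})\in\mathbb R^{n\times n}$ let $\tilde P$ be obtained by replacing $z_{ij}$ with $\tilde z_{ij}=z_{ij}+\epsilon_{ij}$, and set $\Phi(\tilde P)=\mathrm{Cov}(X,\tilde Z)^2+\mathrm{Cov}(Y,\tilde Z)^2$. Then $\Phi(P)=0$, and for generic perturbations $\epsilon$ (i.e. for all $\epsilon$ outside a Lebesgue-null subset of $\mathbb R^{n\times n}$), $\Phi(\tilde P)>0$.
   Context: A magic square of order $n$ is an arrangement of $1,\dots,n^2$ (each once) in an $n\times n$ grid with every row, column, and both main diagonals summing to $n(n^2+1)/2$. $X,Y,\tilde Z$ are the functions $(i,j)\mapsto x_{ij},y_{ij},\tilde z_{ij}$ regarded as random variables under the uniform distribution on cells, with $\mathrm{Cov}(F,G)=\frac1{n^2}\sum_{i,j}(F(i,j)-\bar F)(G(i,j)-\bar G)$. *)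

theory Defs
  imports "HOL-Probability.Probability"
begin

definition grid :: "nat \<Rightarrow> (nat \<times> nat) set" where
  "grid n = {0..<n} \<times> {0..<n}"

definition magic_square :: "nat \<Rightarrow> (nat \<Rightarrow> nat \<Rightarrow> nat) \<Rightarrow> bool" where
  "magic_square n s \<longleftrightarrow>
     bij_betw (\<lambda>(i,j). s i j) (grid n) {1..n^2} \<and>
     (\<forall>i<n. 2 * (\<Sum>j<n. s i j) = n * (n^2 + 1)) \<and>
     (\<forall>j<n. 2 * (\<Sum>i<n. s i j) = n * (n^2 + 1)) \<and>
     2 * (\<Sum>i<n. s i i) = n * (n^2 + 1) \<and>
     2 * (\<Sum>i<n. s i (n - 1 - i)) = n * (n^2 + 1)"

definition cell_mean :: "nat \<Rightarrow> (nat \<Rightarrow> nat \<Rightarrow> real) \<Rightarrow> real" where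
  "cell_mean n F = (\<Sum>(i,j)\<in>grid n. F i j) / real n ^ 2"

definition cell_cov :: "nat \<Rightarrow> (nat \<Rightarrow> nat \<Rightarrow> real) \<Rightarrow> (nat \<Rightarrow> nat \<Rightarrow> real) \<Rightarrow> real" where
  "cell_cov n F G = (\<Sum>(i,j)\<in>grid n. (F i j - cell_mean n F) * (G i j - cell_mean n G)) / real n ^ 2"

definition xcoord :: "nat \<Rightarrow> nat \<Rightarrow> nat \<Rightarrow> real" where
  "xcoord n i j = real j - (real n - 1) / 2"

definition ycoord :: "nat \<Rightarrow> nat \<Rightarrow> nat \<Rightarrow> real" where
  "ycoord n i j = (real n - 1) / 2 - real i"

definition zcoord :: "nat \<Rightarrow> (nat \<Rightarrow> nat \<Rightarrow> nat) \<Rightarrow> nat \<Rightarrow> nat \<Rightarrow> real" where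
  "zcoord n s i j = real (s i j) - (real n ^ 2 + 1) / 2"

definition zpert :: "nat \<Rightarrow> (nat \<Rightarrow> nat \<Rightarrow> nat) \<Rightarrow> (nat \<times> nat \<Rightarrow> real) \<Rightarrow> nat \<Rightarrow> nat \<Rightarrow> real" where
  "zpert n s \<epsilon> i j = zcoord n s i j + \<epsilon> (i, j)"

definition Phi :: "nat \<Rightarrow> (nat \<Rightarrow> nat \<Rightarrow> real) \<Rightarrow> real" where
  "Phi n Z = (cell_cov n (xcoord n) Z)^2 + (cell_cov n (ycoord n) Z)^2"

end

theory Submission
  imports Defs
begin

text \<open>The centred coordinates X and Y are constant along columns and rows respectively,
  so Cov(X, Z) only sees the column sums of Z and Cov(Y, Z) only its row sums; for a magic
  square these vanish, hence \<Phi>(P) = 0. After perturbation, Cov(X, Z~) is an affine function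
  of \<epsilon> with a nonzero linear part, so it vanishes only on an affine hyperplane, which is
  null for the product Lebesgue measure by Fubini (each line in one coordinate direction
  meets it in at most one point).\<close>

lemma AE_PiM_lborel_affine_nonzero:
  fixes w :: "'a \<Rightarrow> real"
  assumes fin: "finite I" and k: "k \<in> I" and wk: "w k \<noteq> 0"
  shows "AE \<epsilon> in PiM I (\<lambda>_. lborel). c + (\<Sum>p\<in>I. w p * \<epsilon> p) \<noteq> 0"
proof -
  interpret product_sigma_finite "\<lambda>_. lborel :: real measure" by standard
  define J where "J = I - {k}"
  have IJ: "I = insert k J" and kJ: "k \<notin> J" and finJ: "finite J"
    using k fin by (auto simp: J_def)
  define L where "L = (\<lambda>\<epsilon>::'a \<Rightarrow> real. c + (\<Sum>p\<in>I. w p * \<epsilon> p))"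
  define N where "N = {\<epsilon>\<in>space (PiM I (\<lambda>_. lborel)). L \<epsilon> = 0}"
  have "L \<in> borel_measurable (PiM I (\<lambda>_. lborel))"
    unfolding L_def by measurable
  then have N_sets: "N \<in> sets (PiM I (\<lambda>_. lborel))"
    unfolding N_def by measurable
  have line_null: "(\<integral>\<^sup>+ y. indicator N (x(k := y)) \<partial>lborel) = 0" for x :: "'a \<Rightarrow> real"
  proof -
    define y0 where "y0 = - (c + (\<Sum>p\<in>J. w p * x p)) / w k"
    have "L (x(k := y)) = w k * y + (c + (\<Sum>p\<in>J. w p * x p))" for y
      unfolding L_def IJ using kJ finJ by (auto intro!: sum.cong)
    then have "x(k := y) \<in> N \<Longrightarrow> y = y0" for y
      using wk unfolding N_def y0_def by (auto simp: field_simps)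
    then have "(\<integral>\<^sup>+ y. indicator N (x(k := y)) \<partial>lborel) \<le> (\<integral>\<^sup>+ y. indicator {y0} y \<partial>lborel)"
      by (intro nn_integral_mono) (auto simp: indicator_def)
    then show ?thesis by simp
  qed
  have "emeasure (PiM I (\<lambda>_. lborel)) N = (\<integral>\<^sup>+ x. indicator N x \<partial>PiM I (\<lambda>_. lborel))"
    using N_sets by simp
  also have "\<dots> = (\<integral>\<^sup>+ x. (\<integral>\<^sup>+ y. indicator N (x(k := y)) \<partial>lborel) \<partial>PiM J (\<lambda>_. lborel))"
    unfolding IJ using N_sets IJ finJ kJ by (intro product_nn_integral_insert) auto
  also have "\<dots> = 0"
    by (simp add: line_null)
  finally have "emeasure (PiM I (\<lambda>_. lborel)) N = 0" .
  then show ?thesis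
    using AE_iff_measurable[OF N_sets, of "\<lambda>\<epsilon>. L \<epsilon> \<noteq> 0"] unfolding N_def L_def by auto
qed

lemma sum_grid: "(\<Sum>p\<in>grid n. f p) = (\<Sum>i<n. \<Sum>j<n. f (i, j))"
  by (simp add: grid_def sum.cartesian_product lessThan_atLeast0)

lemma sum_centred_index: "(\<Sum>j<n. real j - (real n - 1) / 2) = 0"
proof -
  have "(\<Sum>j<n. real j) = real n * (real n - 1) / 2"
    by (induction n) (auto simp: field_simps)
  then show ?thesis
    by (simp add: sum_subtractf)
qed

lemma cell_cov_centred_left:
  assumes "(\<Sum>(i, j)\<in>grid n. F i j) = 0"
  shows "cell_cov n F G = (\<Sum>(i, j)\<in>grid n. F i j * G i j) / real n ^ 2"
proof -
  have "cell_mean n F = 0"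
    using assms by (simp add: cell_mean_def)
  moreover have "(\<Sum>(i, j)\<in>grid n. F i j * (G i j - cell_mean n G))
      = (\<Sum>(i, j)\<in>grid n. F i j * G i j) - cell_mean n G * (\<Sum>(i, j)\<in>grid n. F i j)"
    by (simp add: case_prod_unfold algebra_simps sum_subtractf sum_distrib_left)
  ultimately show ?thesis
    using assms by (simp add: cell_cov_def)
qed

lemma cell_cov_xcoord:
  "cell_cov n (xcoord n) G = (\<Sum>(i, j)\<in>grid n. xcoord n i j * G i j) / real n ^ 2"
  by (rule cell_cov_centred_left) (simp add: sum_grid xcoord_def sum_centred_index)

lemma cell_cov_ycoord:
  "cell_cov n (ycoord n) G = (\<Sum>(i, j)\<in>grid n. ycoord n i j * G i j) / real n ^ 2"
proof (rule cell_cov_centred_left)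
  have "(\<Sum>j<n. (real n - 1) / 2 - real j) = - (\<Sum>j<n. real j - (real n - 1) / 2)"
    by (simp add: sum_negf[symmetric])
  then show "(\<Sum>(i, j)\<in>grid n. ycoord n i j) = 0"
    by (simp add: sum_grid ycoord_def sum_centred_index flip: sum_distrib_left)
qed

lemma cell_cov_xcoord_eq_0:
  assumes "\<And>j. j < n \<Longrightarrow> (\<Sum>i<n. G i j) = 0"
  shows "cell_cov n (xcoord n) G = 0"
proof -
  have "(\<Sum>(i, j)\<in>grid n. xcoord n i j * G i j) = (\<Sum>i<n. \<Sum>j<n. xcoord n i j * G i j)"
    by (simp add: sum_grid)
  also have "\<dots> = (\<Sum>j<n. \<Sum>i<n. xcoord n i j * G i j)"
    by (rule sum.swap)
  also have "\<dots> = (\<Sum>j<n. xcoord n 0 j * (\<Sum>i<n. G i j))"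
    by (simp add: sum_distrib_left xcoord_def)
  also have "\<dots> = 0"
    using assms by simp
  finally show ?thesis
    by (simp add: cell_cov_xcoord)
qed

lemma cell_cov_ycoord_eq_0:
  assumes "\<And>i. i < n \<Longrightarrow> (\<Sum>j<n. G i j) = 0"
  shows "cell_cov n (ycoord n) G = 0"
proof -
  have "(\<Sum>(i, j)\<in>grid n. ycoord n i j * G i j) = (\<Sum>i<n. ycoord n i 0 * (\<Sum>j<n. G i j))"
    by (simp add: sum_grid sum_distrib_left ycoord_def)
  also have "\<dots> = 0"
    using assms by simp
  finally show ?thesis
    by (simp add: cell_cov_ycoord)
qed

lemma sum_centred_magic_line:
  assumes "2 * (\<Sum>k<n. t k) = n * (n^2 + 1)"
  shows "(\<Sum>k<n. real (t k) - (real n ^ 2 + 1) / 2) = 0"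
proof -
  have "2 * (\<Sum>k<n. real (t k)) = real n * (real n ^ 2 + 1)"
    using arg_cong[OF assms, of real] by (simp add: algebra_simps)
  then show ?thesis
    by (simp add: sum_subtractf)
qed

lemma magic_square_col_sum_zcoord:
  assumes "magic_square n s" "j < n"
  shows "(\<Sum>i<n. zcoord n s i j) = 0"
  using assms unfolding magic_square_def zcoord_def by (auto intro: sum_centred_magic_line)

lemma magic_square_row_sum_zcoord:
  assumes "magic_square n s" "i < n"
  shows "(\<Sum>j<n. zcoord n s i j) = 0"
  using assms unfolding magic_square_def zcoord_def by (auto intro: sum_centred_magic_line)

lemma AE_cell_cov_xcoord_perturbed_nonzero:
  assumes "n \<ge> 2"
  shows "AE \<epsilon> in PiM (grid n) (\<lambda>_. lborel). cell_cov n (xcoord n) (\<lambda>i j. Z i j + \<epsilon> (i, j)) \<noteq> 0"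
proof -
  define w where "w = (\<lambda>(i, j). xcoord n i j / real n ^ 2)"
  have "cell_cov n (xcoord n) (\<lambda>i j. Z i j + \<epsilon> (i, j))
      = cell_cov n (xcoord n) Z + (\<Sum>p\<in>grid n. w p * \<epsilon> p)" for \<epsilon>
    by (simp add: cell_cov_xcoord w_def case_prod_unfold distrib_left sum.distrib
        add_divide_distrib sum_divide_distrib)
  moreover have "w (0, n - 1) \<noteq> 0"
    using assms by (simp add: w_def xcoord_def)
  then have "AE \<epsilon> in PiM (grid n) (\<lambda>_. lborel).
      cell_cov n (xcoord n) Z + (\<Sum>p\<in>grid n. w p * \<epsilon> p) \<noteq> 0"
    using assms by (intro AE_PiM_lborel_affine_nonzero) (auto simp: grid_def)
  ultimately show ?thesis
    by simp
qed

theorem mainTheorem6: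
  fixes n :: nat and s :: "nat \<Rightarrow> nat \<Rightarrow> nat"
  assumes "n \<ge> 3" and "magic_square n s"
  shows "Phi n (zcoord n s) = 0 \<and>
         (AE \<epsilon> in PiM (grid n) (\<lambda>_. lborel). Phi n (zpert n s \<epsilon>) > 0)"
proof
  show "Phi n (zcoord n s) = 0"
    using assms(2) unfolding Phi_def
    by (simp add: cell_cov_xcoord_eq_0 cell_cov_ycoord_eq_0
        magic_square_col_sum_zcoord magic_square_row_sum_zcoord)
  have "AE \<epsilon> in PiM (grid n) (\<lambda>_. lborel). cell_cov n (xcoord n) (zpert n s \<epsilon>) \<noteq> 0"
    using AE_cell_cov_xcoord_perturbed_nonzero[of n "zcoord n s"] assms(1)
    by (simp add: zpert_def[abs_def])
  then show "AE \<epsilon> in PiM (grid n) (\<lambda>_. lborel). Phi n (zpert n s \<epsilon>) > 0"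
    by eventually_elim (simp add: Phi_def add_pos_nonneg)
qed

end
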